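(* Let $G$ be a disjoint union of finitely many spectrally threshold dominated graphs, with $G$ having $n$ nodes and $m$ edges, and let $k\in\{1,\dots,n\}$. Then there is a threshold graph $T$ on $n$ nodes with $m$ edges such that $\sum_{i=1}^k\lambda_i(T)\ge\sum_{i=1}^k\lambda_i(G)$.
   Context: All graphs are finite and simple. For a graph $G$ on $n$ nodes, the Laplacian eigenvalues (eigenvalues of $L(G)=D(G)-A(G)$) are $\lambda_1(G)\ge\dots\ge\lambda_n(G)=0$. A threshold graph is a graph obtainable from the empty graph by repeatedly adding a new node that is either isolated or adjacent to all previously added nodes. A graph $G$ on $n$ nodes with $m$ edges is spectrally threshold dominated if for each $k\in\{1,\dots,n\}$ there is a threshold graph $T_k$ on $n$ nodes with $m$ edges satisfying $\sum_{i=1}^k\lambda_i(T_k)\ge\sum_{i=1}^k\lambda_i(G)$. *)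

theory Defs
  imports "Jordan_Normal_Form.Char_Poly"
begin

text \<open>A (finite, simple) graph on n nodes is represented by its node count n and an
  edge relation E on the node set {0..<n}.\<close>

type_synonym graph = "nat \<times> (nat \<Rightarrow> nat \<Rightarrow> bool)"

definition simple_graph :: "nat \<Rightarrow> (nat \<Rightarrow> nat \<Rightarrow> bool) \<Rightarrow> bool" where
  "simple_graph n E \<longleftrightarrow> (\<forall>i j. E i j \<longrightarrow> i < n \<and> j < n \<and> i \<noteq> j \<and> E j i)"

definition num_edges :: "nat \<Rightarrow> (nat \<Rightarrow> nat \<Rightarrow> bool) \<Rightarrow> nat" where
  "num_edges n E = card {(i, j). i < j \<and> j < n \<and> E i j}"

definition degree_of :: "nat \<Rightarrow> (nat \<Rightarrow> nat \<Rightarrow> bool) \<Rightarrow> nat \<Rightarrow> nat" where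
  "degree_of n E i = card {j. j < n \<and> E i j}"

definition laplacian :: "nat \<Rightarrow> (nat \<Rightarrow> nat \<Rightarrow> bool) \<Rightarrow> real mat" where
  "laplacian n E = mat n n (\<lambda>(i, j). (if i = j then real (degree_of n E i) else 0)
                                     - (if E i j then 1 else 0))"

text \<open>Laplacian eigenvalues (roots of the characteristic polynomial, with multiplicity),
  sorted non-increasingly: lap_eigs n E ! (i - 1) is lambda_i.\<close>
definition lap_eigs :: "nat \<Rightarrow> (nat \<Rightarrow> nat \<Rightarrow> bool) \<Rightarrow> real list" where
  "lap_eigs n E = rev (sorted_list_of_multiset (proots (char_poly (laplacian n E))))"

definition lap_eig :: "nat \<Rightarrow> (nat \<Rightarrow> nat \<Rightarrow> bool) \<Rightarrow> nat \<Rightarrow> real" where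
  "lap_eig n E i = lap_eigs n E ! (i - 1)"

definition lap_sum :: "nat \<Rightarrow> (nat \<Rightarrow> nat \<Rightarrow> bool) \<Rightarrow> nat \<Rightarrow> real" where
  "lap_sum n E k = (\<Sum>i = 1..k. lap_eig n E i)"

inductive threshold :: "nat \<Rightarrow> (nat \<Rightarrow> nat \<Rightarrow> bool) \<Rightarrow> bool" where
  empty: "threshold 0 (\<lambda>_ _. False)"
| add_isolated: "threshold n E \<Longrightarrow> threshold (Suc n) E"
| add_dominating: "threshold n E \<Longrightarrow>
     threshold (Suc n) (\<lambda>i j. E i j \<or> (i = n \<and> j < n) \<or> (j = n \<and> i < n))"

definition spectrally_threshold_dominated :: "nat \<Rightarrow> (nat \<Rightarrow> nat \<Rightarrow> bool) \<Rightarrow> bool" where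
  "spectrally_threshold_dominated n E \<longleftrightarrow>
     (\<forall>k \<in> {1..n}. \<exists>T. threshold n T \<and> num_edges n T = num_edges n E \<and>
                         lap_sum n T k \<ge> lap_sum n E k)"

definition disj_union :: "graph \<Rightarrow> graph \<Rightarrow> graph" where
  "disj_union G H = (fst G + fst H,
     (\<lambda>i j. (i < fst G \<and> j < fst G \<and> snd G i j) \<or>
            (fst G \<le> i \<and> fst G \<le> j \<and> snd H (i - fst G) (j - fst G))))"

definition disj_union_list :: "graph list \<Rightarrow> graph" where
  "disj_union_list Gs = foldr disj_union Gs (0, (\<lambda>_ _. False))"

definition graph_iso :: "graph \<Rightarrow> graph \<Rightarrow> bool" where
  "graph_iso G H \<longleftrightarrow> fst G = fst H \<and>
     (\<exists>p. bij_betw p {0..<fst G} {0..<fst H} \<and>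
          (\<forall>i < fst G. \<forall>j < fst G. snd G i j \<longleftrightarrow> snd H (p i) (p j)))"

end

theory Submission
  imports Defs
begin

text \<open>A threshold graph on \<open>n\<close> nodes is coded by the decreasing list \<open>cs\<close> of its
  dominating nodes. It has \<open>\<Sum> cs\<close> edges, and since an isolated node adds the Laplacian
  eigenvalue \<open>0\<close> while a cone over \<open>n\<close> nodes adds \<open>n + 1\<close> and raises all other eigenvalues
  but one \<open>0\<close> by \<open>1\<close>, the sum of its \<open>k\<close> largest Laplacian eigenvalues is
  \<open>F k cs = (\<Sum>i<k. c\<^sub>i + min c\<^sub>i (k - i))\<close>.

  The Laplacian of a disjoint union is block diagonal, so its spectrum is the union of the
  spectra, and its \<open>k\<close> largest eigenvalues are \<open>k\<^sub>1\<close> eigenvalues of the first and \<open>k\<^sub>2\<close> of the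
  second component with \<open>k\<^sub>1 + k\<^sub>2 \<le> k\<close>. Adding two codes entrywise yields a code with the
  combined numbers of nodes and edges, and \<open>F k\<^sub>1 xs + F k\<^sub>2 ys \<le> F (k\<^sub>1 + k\<^sub>2) (xs + ys)\<close>.
  So threshold domination passes to disjoint unions, and isomorphisms preserve spectra and
  edge counts.\<close>

section \<open>Sums of the largest elements of a multiset\<close>

definition top_sum :: "real multiset \<Rightarrow> nat \<Rightarrow> real" where
  "top_sum M k = sum_list (take k (rev (sorted_list_of_multiset M)))"

lemma top_sum_0 [simp]: "top_sum M 0 = 0"
  unfolding top_sum_def by simp

lemma rev_sorted_list_of_multiset_mset:
  "sorted_wrt (\<ge>) xs \<Longrightarrow> rev (sorted_list_of_multiset (mset xs)) = (xs :: 'a :: linorder list)"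
  by (metis properties_for_sort rev_rev_ident mset_rev sorted_list_of_multiset_mset
      sorted_wrt_rev)

lemma top_sum_mset: "sorted_wrt (\<ge>) xs \<Longrightarrow> top_sum (mset xs) k = sum_list (take k xs)"
  unfolding top_sum_def by (subst rev_sorted_list_of_multiset_mset) auto

lemma sum_mset_le_sum_take:
  fixes xs :: "'a :: linordered_ab_group_add list"
  assumes "sorted_wrt (\<ge>) xs" and "N \<subseteq># mset xs"
  shows "sum_mset N \<le> sum_list (take (size N) xs)"
  using assms
proof (induction xs arbitrary: N)
  case (Cons x xs)
  then have sorted: "sorted_wrt (\<ge>) xs" and le_x: "\<forall>y\<in>set xs. y \<le> x" by auto
  show ?case
  proof (cases "x \<in># N")
    case True
    then obtain N' where N: "N = add_mset x N'" by (blast dest: multi_member_split)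
    with Cons.prems(2) have "N' \<subseteq># mset xs" by simp
    with Cons.IH[OF sorted] show ?thesis using N by (simp add: add_left_mono)
  next
    case False
    with Cons.prems(2) have sub: "N \<subseteq># mset xs"
      by (simp add: inter_add_left1 subset_mset.inf.absorb_iff2)
    have IH: "sum_mset N \<le> sum_list (take (size N) xs)" by (rule Cons.IH[OF sorted sub])
    show ?thesis
    proof (cases "size N")
      case (Suc k)
      have "k < length xs" using size_mset_mono[OF sub] Suc by simp
      then have "sum_list (take (size N) xs) = sum_list (take k xs) + xs ! k"
        using Suc by (simp add: take_Suc_conv_app_nth)
      also have "\<dots> \<le> sum_list (take k xs) + x"
        using le_x \<open>k < length xs\<close> by (simp add: add_left_mono)
      finally show ?thesis using IH Suc by (simp add: add.commute)
    qed simp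
  qed
qed simp

lemma sum_mset_le_top_sum: "N \<subseteq># M \<Longrightarrow> sum_mset N \<le> top_sum M (size N)"
  unfolding top_sum_def
  by (rule sum_mset_le_sum_take) (simp_all add: sorted_wrt_rev)

lemma top_sum_union_le:
  fixes A B :: "real multiset"
  obtains k\<^sub>1 k\<^sub>2 where "k\<^sub>1 \<le> size A" "k\<^sub>2 \<le> size B" "k\<^sub>1 + k\<^sub>2 \<le> k"
    and "top_sum (A + B) k \<le> top_sum A k\<^sub>1 + top_sum B k\<^sub>2"
proof -
  define N where "N = mset (take k (rev (sorted_list_of_multiset (A + B))))"
  have "N \<subseteq># A + B"
    unfolding N_def by (metis append_take_drop_id mset_append mset_rev
        mset_sorted_list_of_multiset mset_subset_eq_add_left)
  define N\<^sub>1 where "N\<^sub>1 = N \<inter># A"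
  define N\<^sub>2 where "N\<^sub>2 = N - N\<^sub>1"
  have N\<^sub>1: "N\<^sub>1 \<subseteq># A" unfolding N\<^sub>1_def by simp
  have N\<^sub>2: "N\<^sub>2 \<subseteq># B"
  proof (rule mset_subset_eqI)
    fix y
    have "count N y \<le> count A y + count B y"
      using \<open>N \<subseteq># A + B\<close> by (metis count_union mset_subset_eq_count)
    then show "count N\<^sub>2 y \<le> count B y" unfolding N\<^sub>2_def N\<^sub>1_def by simp
  qed
  have N: "N = N\<^sub>1 + N\<^sub>2" by (rule multiset_eqI) (simp add: N\<^sub>1_def N\<^sub>2_def)
  have "top_sum (A + B) k = sum_mset N"
    unfolding top_sum_def N_def by (simp add: sum_mset_sum_list)
  also have "\<dots> = sum_mset N\<^sub>1 + sum_mset N\<^sub>2" unfolding N by simp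
  also have "\<dots> \<le> top_sum A (size N\<^sub>1) + top_sum B (size N\<^sub>2)"
    using sum_mset_le_top_sum[OF N\<^sub>1] sum_mset_le_top_sum[OF N\<^sub>2] by simp
  finally have "top_sum (A + B) k \<le> top_sum A (size N\<^sub>1) + top_sum B (size N\<^sub>2)" .
  moreover have "size N\<^sub>1 + size N\<^sub>2 \<le> k"
    unfolding size_union[symmetric] N[symmetric] N_def by simp
  ultimately show thesis using that size_mset_mono[OF N\<^sub>1] size_mset_mono[OF N\<^sub>2] by simp
qed

lemma sum_nth_pred_eq_sum_list_take:
  "k \<le> length xs \<Longrightarrow> (\<Sum>i = 1..k. xs ! (i - 1)) = sum_list (take k xs)"
  by (induction k) (simp_all add: take_Suc_conv_app_nth)


section \<open>Characteristic polynomials\<close>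

lemma poly_eqI_cofinite:
  fixes p q :: "'a :: {idom, ring_char_0} poly"
  assumes "\<And>x. x \<noteq> c \<Longrightarrow> poly p x = poly q x"
  shows "p = q"
proof (rule ccontr)
  assume "p \<noteq> q"
  then have "finite {x. poly (p - q) x = 0}" by (intro poly_roots_finite) simp
  moreover have "UNIV - {c} \<subseteq> {x. poly (p - q) x = 0}" using assms by auto
  ultimately show False
    using infinite_UNIV_char_0 by (metis Diff_infinite_finite finite.emptyI finite.insertI
        finite_subset)
qed

lemma proots_prod_list_linear: "proots (\<Prod>e\<leftarrow>es. [:- e, 1:]) = mset (es :: 'a :: idom list)"
proof (induction es)
  case (Cons e es)
  have "(\<Prod>e\<leftarrow>es. [:- e, 1:]) \<noteq> 0" by (auto simp: prod_list_zero_iff)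
  then have "proots ([:- e, 1:] * (\<Prod>e\<leftarrow>es. [:- e, 1:])) = add_mset e (proots (\<Prod>e\<leftarrow>es. [:- e, 1:]))"
    by (subst proots_mult) (auto simp: proots_linear_factor)
  then show ?case using Cons by simp
qed simp

lemma poly_char_poly_eq_det:
  assumes "(A :: 'a :: field mat) \<in> carrier_mat n n"
  shows "poly (char_poly A) x = det (x \<cdot>\<^sub>m 1\<^sub>m n - A)"
proof -
  have "- char_matrix A x = x \<cdot>\<^sub>m 1\<^sub>m n - A"
    using assms unfolding char_matrix_def by (intro eq_matI) auto
  then show ?thesis using char_poly_matrix[OF assms] by simp
qed

lemma char_poly_four_block_diag:
  assumes A: "(A :: 'a :: idom mat) \<in> carrier_mat n n" and B: "B \<in> carrier_mat m m"
  shows "char_poly (four_block_mat A (0\<^sub>m n m) (0\<^sub>m m n) B) = char_poly A * char_poly B"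
proof -
  let ?cm = "\<lambda>A. [:0, 1:] \<cdot>\<^sub>m 1\<^sub>m (dim_row A) + map_mat (\<lambda>a. [:- a:]) A"
  have "?cm (four_block_mat A (0\<^sub>m n m) (0\<^sub>m m n) B) =
      four_block_mat (?cm A) (0\<^sub>m n m) (0\<^sub>m m n) (?cm B)"
    using A B by (intro eq_matI) (auto simp: one_poly_def)
  then have "char_poly (four_block_mat A (0\<^sub>m n m) (0\<^sub>m m n) B) =
      det (four_block_mat (?cm A) (0\<^sub>m n m) (0\<^sub>m m n) (?cm B))"
    unfolding char_poly_defs by simp
  also have "\<dots> = det (?cm A) * det (?cm B)"
    by (rule det_four_block_mat_upper_right_zero) (use A B in auto)
  finally show ?thesis unfolding char_poly_defs .
qed

lemma char_poly_zero_1: "char_poly (0\<^sub>m 1 1 :: 'a :: comm_ring_1 mat) = [:0, 1:]"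
  by (subst char_poly_upper_triangular[of _ 1]) (auto simp: diag_mat_def)


section \<open>Real symmetric matrices\<close>

lemma hermitian_form_Reals:
  fixes A :: "real mat" and v :: "complex vec"
  assumes sym: "\<forall>i<n. \<forall>j<n. A $$ (i, j) = A $$ (j, i)"
  shows "(\<Sum>i<n. \<Sum>j<n. cnj (v $ i) * of_real (A $$ (i, j)) * v $ j) \<in> \<real>"
proof -
  let ?s = "\<Sum>i<n. \<Sum>j<n. cnj (v $ i) * of_real (A $$ (i, j)) * v $ j"
  have "cnj ?s = (\<Sum>i<n. \<Sum>j<n. v $ i * of_real (A $$ (i, j)) * cnj (v $ j))"
    by (simp add: cnj_sum)
  also have "\<dots> = (\<Sum>j<n. \<Sum>i<n. v $ i * of_real (A $$ (i, j)) * cnj (v $ j))"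
    by (rule sum.swap)
  also have "\<dots> = ?s"
    by (intro sum.cong refl) (use sym in \<open>auto simp: ac_simps\<close>)
  finally show ?thesis by (simp add: Reals_cnj_iff)
qed

lemma hermitian_form_eigenvector:
  fixes A :: "real mat"
  assumes A: "A \<in> carrier_mat n n" and ev: "eigenvector (map_mat complex_of_real A) v a"
  shows "(\<Sum>i<n. \<Sum>j<n. cnj (v $ i) * of_real (A $$ (i, j)) * v $ j) =
    a * of_real (\<Sum>i<n. (cmod (v $ i))\<^sup>2)"
proof -
  have v: "v \<in> carrier_vec n" and Av: "map_mat complex_of_real A *\<^sub>v v = a \<cdot>\<^sub>v v"
    using ev A unfolding eigenvector_def by auto
  have row: "(\<Sum>j<n. of_real (A $$ (i, j)) * v $ j) = a * v $ i" if "i < n" for i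
    using arg_cong[OF Av, of "\<lambda>w. w $ i"] that A v
    by (simp add: scalar_prod_def atLeast0LessThan)
  have "(\<Sum>i<n. \<Sum>j<n. cnj (v $ i) * of_real (A $$ (i, j)) * v $ j) =
      (\<Sum>i<n. cnj (v $ i) * (a * v $ i))"
    by (intro sum.cong refl) (simp add: row sum_distrib_left mult.assoc flip: row)
  also have "\<dots> = a * of_real (\<Sum>i<n. (cmod (v $ i))\<^sup>2)"
    unfolding of_real_sum complex_norm_square by (simp add: sum_distrib_left ac_simps)
  finally show ?thesis .
qed

lemma eigenvalue_real_if_symmetric:
  fixes A :: "real mat"
  assumes A: "A \<in> carrier_mat n n" and sym: "\<forall>i<n. \<forall>j<n. A $$ (i, j) = A $$ (j, i)"
    and "eigenvalue (map_mat complex_of_real A) a"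
  shows "a \<in> \<real>"
proof -
  obtain v where ev: "eigenvector (map_mat complex_of_real A) v a"
    using assms(3) unfolding eigenvalue_def by blast
  then have v: "v \<in> carrier_vec n" "v \<noteq> 0\<^sub>v n" using A unfolding eigenvector_def by auto
  define r where "r = (\<Sum>i<n. (cmod (v $ i))\<^sup>2)"
  obtain i where "i < n" "v $ i \<noteq> 0" using v by (metis eq_vecI carrier_vecD index_zero_vec)
  then have "r \<noteq> 0" unfolding r_def by (intro sum_pos2[of _ i, THEN less_imp_neq, symmetric]) auto
  moreover have "a * of_real r \<in> \<real>"
    using hermitian_form_Reals[OF sym, of v] unfolding hermitian_form_eigenvector[OF A ev] r_def .
  ultimately have "(a * of_real r) / of_real r \<in> \<real>" by (intro Reals_divide) auto
  with \<open>r \<noteq> 0\<close> show ?thesis by simp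
qed

lemma char_poly_real_symmetric_split:
  fixes A :: "real mat"
  assumes A: "A \<in> carrier_mat n n" and sym: "\<forall>i<n. \<forall>j<n. A $$ (i, j) = A $$ (j, i)"
  obtains es where "char_poly A = (\<Prod>e\<leftarrow>es. [:- e, 1:])" "length es = n"
proof -
  let ?B = "map_mat complex_of_real A"
  have B: "?B \<in> carrier_mat n n" using A by simp
  obtain as where B_split: "char_poly ?B = (\<Prod>a\<leftarrow>as. [:- a, 1:])" and "length as = n"
    using char_poly_factorized[OF B] by blast
  have real: "a \<in> \<real>" if "a \<in> set as" for a
  proof (rule eigenvalue_real_if_symmetric[OF A sym])
    have "poly (char_poly ?B) a = 0"
      unfolding B_split using that by (auto simp: poly_prod_list prod_list_zero_iff)
    then show "eigenvalue ?B a" using eigenvalue_root_char_poly[OF B] by simp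
  qed
  have "char_poly A = (\<Prod>e\<leftarrow>map Re as. [:- e, 1:])"
  proof (rule poly_eqI_cofinite)
    fix x :: real
    have "char_poly ?B = map_poly of_real (char_poly A)"
      using of_real_hom.char_poly_hom[OF A] by simp
    then have "of_real (poly (char_poly A) x) = poly (char_poly ?B) (of_real x)"
      by (simp only: of_real_hom.poly_map_poly)
    also have "\<dots> = (\<Prod>a\<leftarrow>as. of_real x - a)"
      unfolding B_split by (simp add: poly_prod_list o_def)
    also have "\<dots> = of_real (\<Prod>a\<leftarrow>as. x - Re a)"
      using real by (induction as) (auto simp: complex_eq_iff)
    finally show "poly (char_poly A) x = poly (\<Prod>e\<leftarrow>map Re as. [:- e, 1:]) x"
      by (simp add: poly_prod_list o_def)
  qed
  with \<open>length as = n\<close> show thesis by (intro that[of "map Re as"]) simp_all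
qed


section \<open>Laplacian spectra\<close>

lemma laplacian_carrier [simp]: "laplacian n E \<in> carrier_mat n n"
  unfolding laplacian_def by simp

lemma dim_laplacian [simp]: "dim_row (laplacian n E) = n" "dim_col (laplacian n E) = n"
  unfolding laplacian_def by auto

lemma index_laplacian:
  "i < n \<Longrightarrow> j < n \<Longrightarrow> laplacian n E $$ (i, j) =
    (if i = j then real (degree_of n E i) else 0) - (if E i j then 1 else 0)"
  unfolding laplacian_def by simp

lemma laplacian_symmetric:
  "simple_graph n E \<Longrightarrow> \<forall>i<n. \<forall>j<n. laplacian n E $$ (i, j) = laplacian n E $$ (j, i)"
  unfolding simple_graph_def by (auto simp: index_laplacian)

lemma laplacian_row_sum:
  assumes "simple_graph n E" and "i < n"
  shows "(\<Sum>j<n. laplacian n E $$ (i, j)) = 0"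
proof -
  have "(\<Sum>j<n. laplacian n E $$ (i, j)) =
      (\<Sum>j<n. if i = j then real (degree_of n E i) else 0) - (\<Sum>j<n. if E i j then 1 else 0)"
    using assms(2) by (simp add: index_laplacian sum_subtractf)
  also have "(\<Sum>j<n. if E i j then 1 else 0 :: real) = real (degree_of n E i)"
    unfolding degree_of_def by (simp add: sum.If_cases Int_def conj_commute)
  finally show ?thesis using assms(2) by simp
qed

definition lap_spectrum :: "nat \<Rightarrow> (nat \<Rightarrow> nat \<Rightarrow> bool) \<Rightarrow> real multiset" where
  "lap_spectrum n E = proots (char_poly (laplacian n E))"

lemma char_poly_laplacian_nonzero: "char_poly (laplacian n E) \<noteq> 0"
  using degree_monic_char_poly[OF laplacian_carrier[of n E]] by auto

lemma size_lap_spectrum: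
  assumes "simple_graph n E"
  shows "size (lap_spectrum n E) = n"
proof -
  obtain es where "char_poly (laplacian n E) = (\<Prod>e\<leftarrow>es. [:- e, 1:])" "length es = n"
    using char_poly_real_symmetric_split[OF laplacian_carrier laplacian_symmetric[OF assms]] .
  then show ?thesis by (simp add: lap_spectrum_def proots_prod_list_linear)
qed

lemma lap_sum_eq_top_sum:
  assumes "simple_graph n E" and "k \<le> n"
  shows "lap_sum n E k = top_sum (lap_spectrum n E) k"
  unfolding lap_sum_def lap_eig_def top_sum_def lap_eigs_def lap_spectrum_def[symmetric]
  using size_lap_spectrum[OF assms(1)] assms(2)
  by (intro sum_nth_pred_eq_sum_list_take) (metis length_rev mset_sorted_list_of_multiset size_mset)


section \<open>Isomorphic graphs\<close>

lemma similar_mat_permute: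
  fixes A B :: "'a :: field mat"
  assumes p: "bij_betw p {0..<n} {0..<n}"
    and A: "A \<in> carrier_mat n n" and B: "B \<in> carrier_mat n n"
    and AB: "\<And>i j. i < n \<Longrightarrow> j < n \<Longrightarrow> A $$ (i, j) = B $$ (p i, p j)"
  shows "similar_mat A B"
proof -
  have p_less: "p i < n" if "i < n" for i using p that by (auto dest: bij_betwE)
  have delta: "(if c then 1 else 0) * x = (if c then x else 0)"
    "x * (if c then 1 else 0) = (if c then x else 0)" for c and x :: 'a
    by simp_all
  define P where "P = mat n n (\<lambda>(i, a). if p i = a then 1 else (0 :: 'a))"
  define Q where "Q = mat n n (\<lambda>(b, j). if b = p j then 1 else (0 :: 'a))"
  have P: "P \<in> carrier_mat n n" and Q: "Q \<in> carrier_mat n n" unfolding P_def Q_def by auto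
  have PB: "P * B = mat n n (\<lambda>(i, b). B $$ (p i, b))"
    using p_less B by (intro eq_matI) (simp_all add: P_def scalar_prod_def delta sum.delta)
  have "A = P * B * Q"
    unfolding PB using A p_less AB
    by (intro eq_matI) (simp_all add: Q_def scalar_prod_def delta sum.delta')
  moreover have PQ: "P * Q = 1\<^sub>m n"
  proof (rule eq_matI)
    fix i j assume "i < dim_row (1\<^sub>m n :: 'a mat)" "j < dim_col (1\<^sub>m n :: 'a mat)"
    then have "i < n" "j < n" by auto
    moreover have "p i = p j \<longleftrightarrow> i = j"
      using \<open>i < n\<close> \<open>j < n\<close> p by (auto simp: bij_betw_def dest: inj_onD)
    ultimately show "(P * Q) $$ (i, j) = 1\<^sub>m n $$ (i, j)"
      using p_less by (simp add: P_def Q_def scalar_prod_def delta sum.delta)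
  qed (use P Q in auto)
  moreover have "Q * P = 1\<^sub>m n" by (rule mat_mult_left_right_inverse[OF P Q PQ])
  ultimately show ?thesis by (intro similar_matI[of _ _ P Q n]) (use A B P Q in auto)
qed

lemma degree_of_iso:
  assumes p: "bij_betw p {0..<n} {0..<n}" and rel: "\<forall>i<n. \<forall>j<n. E i j \<longleftrightarrow> F (p i) (p j)"
    and "i < n"
  shows "degree_of n F (p i) = degree_of n E i"
proof -
  have "{j. j < n \<and> F (p i) j} = p ` {j. j < n \<and> E i j}"
  proof (intro equalityI subsetI)
    fix j assume j: "j \<in> {j. j < n \<and> F (p i) j}"
    then have "j \<in> p ` {0..<n}" using bij_betw_imp_surj_on[OF p] by auto
    then obtain j' where "j' < n" "j = p j'" by auto
    with j rel \<open>i < n\<close> show "j \<in> p ` {j. j < n \<and> E i j}" by auto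
  next
    fix j assume "j \<in> p ` {j. j < n \<and> E i j}"
    then show "j \<in> {j. j < n \<and> F (p i) j}" using rel \<open>i < n\<close> bij_betwE[OF p] by auto
  qed
  moreover have "inj_on p {j. j < n \<and> E i j}"
    using p by (auto simp: bij_betw_def intro: inj_on_subset)
  ultimately show ?thesis unfolding degree_of_def by (simp add: card_image)
qed

lemma lap_spectrum_iso:
  assumes "graph_iso (n, E) (m, F)"
  shows "lap_spectrum n E = lap_spectrum m F"
proof -
  obtain p where "m = n" and p: "bij_betw p {0..<n} {0..<n}"
    and rel: "\<forall>i<n. \<forall>j<n. E i j \<longleftrightarrow> F (p i) (p j)"
    using assms unfolding graph_iso_def by auto
  have "p i = p j \<longleftrightarrow> i = j" if "i < n" "j < n" for i j
    using p that by (auto simp: bij_betw_def dest: inj_onD)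
  then have "similar_mat (laplacian n E) (laplacian n F)"
    using rel degree_of_iso[OF p rel] bij_betwE[OF p]
    by (intro similar_mat_permute[OF p]) (auto simp: index_laplacian)
  then show ?thesis unfolding lap_spectrum_def \<open>m = n\<close> by (simp add: char_poly_similar)
qed

lemma card_adjacent_pairs:
  assumes "simple_graph n E"
  shows "card {(i, j). i < n \<and> j < n \<and> E i j} = 2 * num_edges n E"
proof -
  let ?S = "{(i, j). i < j \<and> j < n \<and> E i j}"
  have "{(i, j). i < n \<and> j < n \<and> E i j} = ?S \<union> prod.swap ` ?S"
  proof (intro equalityI subsetI)
    fix x assume "x \<in> {(i, j). i < n \<and> j < n \<and> E i j}"
    then obtain i j where x: "x = (i, j)" "i < n" "j < n" "E i j" by blast
    with assms have "i \<noteq> j" "E j i" unfolding simple_graph_def by blast+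
    then show "x \<in> ?S \<union> prod.swap ` ?S"
      using x by (cases "i < j") (auto intro: image_eqI[of _ _ "(j, i)"])
  qed (use assms in \<open>auto simp: simple_graph_def\<close>)
  moreover have "finite ?S" by (rule finite_subset[of _ "{..<n} \<times> {..<n}"]) auto
  moreover have "?S \<inter> prod.swap ` ?S = {}" by auto
  moreover have "card (prod.swap ` ?S) = card ?S" by (rule card_image) (auto simp: inj_on_def)
  ultimately show ?thesis unfolding num_edges_def by (simp add: card_Un_disjoint)
qed

lemma num_edges_iso:
  assumes "simple_graph n E" and "simple_graph m F" and "graph_iso (n, E) (m, F)"
  shows "num_edges n E = num_edges m F"
proof -
  obtain p where "m = n" and p: "bij_betw p {0..<n} {0..<n}"
    and rel: "\<forall>i<n. \<forall>j<n. E i j \<longleftrightarrow> F (p i) (p j)"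
    using assms(3) unfolding graph_iso_def by auto
  let ?f = "\<lambda>(i, j). (p i, p j)"
  let ?A = "{(i, j). i < n \<and> j < n \<and> E i j}"
  have "{(i, j). i < n \<and> j < n \<and> F i j} = ?f ` ?A"
  proof (intro equalityI subsetI)
    fix x assume "x \<in> {(i, j). i < n \<and> j < n \<and> F i j}"
    then obtain a b where ab: "x = (a, b)" "a < n" "b < n" "F a b" by blast
    then have "a \<in> p ` {0..<n}" "b \<in> p ` {0..<n}" using bij_betw_imp_surj_on[OF p] by auto
    then obtain i j where "i < n" "a = p i" "j < n" "b = p j" by auto
    with ab rel show "x \<in> ?f ` ?A" by (auto intro: image_eqI[of _ _ "(i, j)"])
  next
    fix x assume "x \<in> ?f ` ?A"
    then show "x \<in> {(i, j). i < n \<and> j < n \<and> F i j}" using rel bij_betwE[OF p] by auto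
  qed
  moreover have "inj_on ?f ?A" using p by (auto simp: bij_betw_def inj_on_def)
  ultimately have "card {(i, j). i < n \<and> j < n \<and> F i j} = card ?A" by (simp add: card_image)
  then show ?thesis using card_adjacent_pairs assms(1,2) \<open>m = n\<close> by simp
qed


section \<open>Disjoint unions\<close>

definition disj_union_rel ::
  "nat \<Rightarrow> (nat \<Rightarrow> nat \<Rightarrow> bool) \<Rightarrow> (nat \<Rightarrow> nat \<Rightarrow> bool) \<Rightarrow> nat \<Rightarrow> nat \<Rightarrow> bool" where
  "disj_union_rel n1 E1 E2 =
    (\<lambda>i j. (i < n1 \<and> j < n1 \<and> E1 i j) \<or> (n1 \<le> i \<and> n1 \<le> j \<and> E2 (i - n1) (j - n1)))"

lemma disj_union_Pair: "disj_union (n1, E1) (n2, E2) = (n1 + n2, disj_union_rel n1 E1 E2)"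
  unfolding disj_union_def disj_union_rel_def by simp

lemma simple_graph_disj_union:
  assumes "simple_graph n1 E1" and "simple_graph n2 E2"
  shows "simple_graph (n1 + n2) (disj_union_rel n1 E1 E2)"
  unfolding simple_graph_def
proof (intro allI impI)
  fix i j assume "disj_union_rel n1 E1 E2 i j"
  then consider "i < n1" "j < n1" "E1 i j" | "n1 \<le> i" "n1 \<le> j" "E2 (i - n1) (j - n1)"
    unfolding disj_union_rel_def by blast
  then show "i < n1 + n2 \<and> j < n1 + n2 \<and> i \<noteq> j \<and> disj_union_rel n1 E1 E2 j i"
  proof cases
    case 1
    with assms(1) have "E1 j i" "i \<noteq> j" unfolding simple_graph_def by blast+
    with 1 show ?thesis unfolding disj_union_rel_def by auto
  next
    case 2
    with assms(2) have "i - n1 < n2" "j - n1 < n2" "i - n1 \<noteq> j - n1" "E2 (j - n1) (i - n1)"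
      unfolding simple_graph_def by blast+
    with 2 show ?thesis unfolding disj_union_rel_def by auto
  qed
qed

lemma laplacian_disj_union:
  assumes G1: "simple_graph n1 E1" and G2: "simple_graph n2 E2"
  shows "laplacian (n1 + n2) (disj_union_rel n1 E1 E2) =
    four_block_mat (laplacian n1 E1) (0\<^sub>m n1 n2) (0\<^sub>m n2 n1) (laplacian n2 E2)"
proof -
  let ?E = "disj_union_rel n1 E1 E2"
  have deg1: "degree_of (n1 + n2) ?E i = degree_of n1 E1 i" if "i < n1" for i
  proof -
    have "{j. j < n1 + n2 \<and> ?E i j} = {j. j < n1 \<and> E1 i j}"
      using that unfolding disj_union_rel_def by auto
    then show ?thesis unfolding degree_of_def by simp
  qed
  have deg2: "degree_of (n1 + n2) ?E i = degree_of n2 E2 (i - n1)" if "n1 \<le> i" for i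
  proof -
    have "{j. j < n1 + n2 \<and> ?E i j} = (\<lambda>j. j + n1) ` {j. j < n2 \<and> E2 (i - n1) j}"
    proof (intro equalityI subsetI)
      fix j assume "j \<in> {j. j < n1 + n2 \<and> ?E i j}"
      then have "j < n1 + n2" "n1 \<le> j" "E2 (i - n1) (j - n1)"
        using that unfolding disj_union_rel_def by auto
      then show "j \<in> (\<lambda>j. j + n1) ` {j. j < n2 \<and> E2 (i - n1) j}"
        by (intro image_eqI[of _ _ "j - n1"]) auto
    qed (use that in \<open>auto simp: disj_union_rel_def\<close>)
    then show ?thesis unfolding degree_of_def by (simp add: card_image)
  qed
  show ?thesis
  proof (rule eq_matI)
    fix i j assume "i < dim_row (four_block_mat (laplacian n1 E1) (0\<^sub>m n1 n2) (0\<^sub>m n2 n1) (laplacian n2 E2))"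
      "j < dim_col (four_block_mat (laplacian n1 E1) (0\<^sub>m n1 n2) (0\<^sub>m n2 n1) (laplacian n2 E2))"
    then have "i < n1 + n2" "j < n1 + n2" by auto
    then show "laplacian (n1 + n2) ?E $$ (i, j) =
      four_block_mat (laplacian n1 E1) (0\<^sub>m n1 n2) (0\<^sub>m n2 n1) (laplacian n2 E2) $$ (i, j)"
      using deg1[of i] deg2[of i]
      by (cases "i < n1"; cases "j < n1")
        (auto simp: index_laplacian index_mat_four_block disj_union_rel_def)
  qed auto
qed

lemma lap_spectrum_disj_union:
  assumes "simple_graph n1 E1" and "simple_graph n2 E2"
  shows "lap_spectrum (n1 + n2) (disj_union_rel n1 E1 E2) = lap_spectrum n1 E1 + lap_spectrum n2 E2"
  unfolding lap_spectrum_def laplacian_disj_union[OF assms]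
  by (simp add: char_poly_four_block_diag proots_mult char_poly_laplacian_nonzero)

lemma num_edges_disj_union:
  assumes "simple_graph n1 E1" and "simple_graph n2 E2"
  shows "num_edges (n1 + n2) (disj_union_rel n1 E1 E2) = num_edges n1 E1 + num_edges n2 E2"
proof -
  let ?S = "{(i, j). i < j \<and> j < n1 \<and> E1 i j}"
  let ?T = "{(i, j). i < j \<and> j < n2 \<and> E2 i j}"
  let ?f = "\<lambda>(i, j). (i + n1, j + n1)"
  have "{(i, j). i < j \<and> j < n1 + n2 \<and> disj_union_rel n1 E1 E2 i j} = ?S \<union> ?f ` ?T"
  proof (intro equalityI subsetI)
    fix x assume "x \<in> {(i, j). i < j \<and> j < n1 + n2 \<and> disj_union_rel n1 E1 E2 i j}"
    then obtain i j where x: "x = (i, j)" "i < j" "j < n1 + n2" "disj_union_rel n1 E1 E2 i j"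
      by blast
    show "x \<in> ?S \<union> ?f ` ?T"
    proof (cases "i < n1 \<and> j < n1 \<and> E1 i j")
      case False
      then have "n1 \<le> i" "n1 \<le> j" "E2 (i - n1) (j - n1)"
        using x unfolding disj_union_rel_def by auto
      with x have "x = ?f (i - n1, j - n1)" "(i - n1, j - n1) \<in> ?T" by auto
      then show ?thesis by blast
    qed (use x in auto)
  qed (auto simp: disj_union_rel_def)
  moreover have "finite ?S" by (rule finite_subset[of _ "{..<n1} \<times> {..<n1}"]) auto
  moreover have "finite ?T" by (rule finite_subset[of _ "{..<n2} \<times> {..<n2}"]) auto
  moreover have "?S \<inter> ?f ` ?T = {}" by auto
  moreover have "card (?f ` ?T) = card ?T" by (rule card_image) (auto simp: inj_on_def)
  ultimately show ?thesis unfolding num_edges_def by (simp add: card_Un_disjoint)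
qed


section \<open>Isolated and dominating nodes\<close>

lemma laplacian_add_isolated:
  assumes "simple_graph n E"
  shows "laplacian (Suc n) E = four_block_mat (laplacian n E) (0\<^sub>m n 1) (0\<^sub>m 1 n) (0\<^sub>m 1 1)"
proof -
  have within: "\<And>i j. E i j \<Longrightarrow> i < n \<and> j < n" using assms unfolding simple_graph_def by blast
  then have "degree_of (Suc n) E i = degree_of n E i" for i
    unfolding degree_of_def by (metis less_Suc_eq)
  moreover have "degree_of n E n = 0" unfolding degree_of_def using within by auto
  ultimately show ?thesis
    using within by (intro eq_matI) (auto simp: index_laplacian index_mat_four_block less_Suc_eq)
qed

lemma char_poly_laplacian_add_isolated:
  "simple_graph n E \<Longrightarrow> char_poly (laplacian (Suc n) E) = char_poly (laplacian n E) * [:0, 1:]"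
  by (simp add: laplacian_add_isolated char_poly_four_block_diag char_poly_zero_1[simplified])

lemma num_edges_add_isolated: "simple_graph n E \<Longrightarrow> num_edges (Suc n) E = num_edges n E"
  unfolding num_edges_def simple_graph_def by (metis less_Suc_eq)

definition cone :: "nat \<Rightarrow> (nat \<Rightarrow> nat \<Rightarrow> bool) \<Rightarrow> nat \<Rightarrow> nat \<Rightarrow> bool" where
  "cone n E = (\<lambda>i j. E i j \<or> (i = n \<and> j < n) \<or> (j = n \<and> i < n))"

lemma laplacian_cone:
  assumes "simple_graph n E"
  shows "laplacian (Suc n) (cone n E) = four_block_mat (laplacian n E + 1\<^sub>m n)
    (mat n 1 (\<lambda>_. -1)) (mat 1 n (\<lambda>_. -1)) (mat 1 1 (\<lambda>_. real n))"
proof -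
  have within: "\<And>i j. E i j \<Longrightarrow> i < n \<and> j < n" and irrefl: "\<And>i. \<not> E i i"
    using assms unfolding simple_graph_def by auto
  have "{j. j < Suc n \<and> cone n E i j} = insert n {j. j < n \<and> E i j}" if "i < n" for i
    using within that unfolding cone_def by (auto simp: less_Suc_eq)
  then have deg: "degree_of (Suc n) (cone n E) i = Suc (degree_of n E i)" if "i < n" for i
    using that unfolding degree_of_def by simp
  have "{j. j < Suc n \<and> cone n E n j} = {..<n}"
    using within unfolding cone_def by (auto simp: less_Suc_eq)
  then have deg_n: "degree_of (Suc n) (cone n E) n = n"
    unfolding degree_of_def by simp
  show ?thesis
    using within irrefl deg deg_n unfolding cone_def
    by (intro eq_matI) (auto simp: index_laplacian index_mat_four_block less_Suc_eq)
qed

lemma num_edges_cone: "simple_graph n E \<Longrightarrow> num_edges (Suc n) (cone n E) = num_edges n E + n"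
proof -
  assume "simple_graph n E"
  then have within: "\<And>i j. E i j \<Longrightarrow> i < n \<and> j < n" unfolding simple_graph_def by blast
  let ?A = "{(i, j). i < j \<and> j < n \<and> E i j}"
  let ?B = "(\<lambda>i. (i, n)) ` {..<n}"
  have "{(i, j). i < j \<and> j < Suc n \<and> cone n E i j} = ?A \<union> ?B"
    using within unfolding cone_def by (auto simp: less_Suc_eq)
  moreover have "finite ?A" by (rule finite_subset[of _ "{..<n} \<times> {..<n}"]) auto
  moreover have "?A \<inter> ?B = {}" by auto
  moreover have "card ?B = n" by (subst card_image) (auto simp: inj_on_def)
  ultimately show ?thesis unfolding num_edges_def by (simp add: card_Un_disjoint)
qed

text \<open>Right multiplication by \<open>Q\<close> replaces the last column of \<open>x I - L\<close> by \<open>x - 1\<close> times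
  itself minus the sum of the other columns; as the row sums of the Laplacian vanish, this
  makes the matrix block triangular.\<close>

lemma poly_char_poly_laplacian_cone:
  assumes G: "simple_graph n E"
  shows "(x - 1) * poly (char_poly (laplacian (Suc n) (cone n E))) x =
    x * (x - real n - 1) * poly (char_poly (laplacian n E)) (x - 1)"
proof -
  let ?L = "laplacian n E"
  define A where "A = (x - 1) \<cdot>\<^sub>m 1\<^sub>m n - ?L"
  define M where "M = four_block_mat A (mat n 1 (\<lambda>_. 1)) (mat 1 n (\<lambda>_. 1)) (mat 1 1 (\<lambda>_. x - real n))"
  define Q where "Q = four_block_mat (1\<^sub>m n) (mat n 1 (\<lambda>_. -1)) (0\<^sub>m 1 n) (mat 1 1 (\<lambda>_. x - 1))"
  have A: "A \<in> carrier_mat n n" unfolding A_def by (rule minus_carrier_mat) simp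
  have M: "M \<in> carrier_mat (Suc n) (Suc n)" and Q: "Q \<in> carrier_mat (Suc n) (Suc n)"
    unfolding M_def Q_def using A by auto
  have M_eq: "x \<cdot>\<^sub>m 1\<^sub>m (Suc n) - laplacian (Suc n) (cone n E) = M"
    unfolding laplacian_cone[OF G] M_def A_def
    by (intro eq_matI) (auto simp: index_mat_four_block less_Suc_eq)
  have A_row_sum: "(\<Sum>k<n. A $$ (i, k)) = x - 1" if "i < n" for i
  proof -
    have "(\<Sum>k<n. A $$ (i, k)) = (\<Sum>k<n. (if i = k then x - 1 else 0) - ?L $$ (i, k))"
      using that by (intro sum.cong) (auto simp: A_def)
    then show ?thesis using laplacian_row_sum[OF G that] that by (simp add: sum_subtractf)
  qed
  have "M * Q = four_block_mat A (0\<^sub>m n 1) (mat 1 n (\<lambda>_. 1)) (mat 1 1 (\<lambda>_. x * (x - real n - 1)))"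
    unfolding M_def Q_def using A A_row_sum
    by (subst mult_four_block_mat[OF A]) (auto intro!: eq_matI
        simp: scalar_prod_def atLeast0LessThan sum_negf algebra_simps)
  then have "det M * (x - 1) = det A * (x * (x - real n - 1))"
    using det_mult[OF M Q] A
    by (simp add: Q_def det_four_block_mat_lower_left_zero[of _ n _ 1]
        det_four_block_mat_upper_right_zero[of _ n _ 1] det_single)
  moreover have "det A = poly (char_poly ?L) (x - 1)"
    using poly_char_poly_eq_det[OF laplacian_carrier, of n E "x - 1"] unfolding A_def by simp
  moreover have "poly (char_poly (laplacian (Suc n) (cone n E))) x = det M"
    using poly_char_poly_eq_det[OF laplacian_carrier] M_eq by simp
  ultimately show ?thesis by (simp add: algebra_simps)
qed

lemma char_poly_laplacian_cone:
  assumes "simple_graph n E" and "char_poly (laplacian n E) = (\<Prod>e\<leftarrow>es @ [0]. [:- e, 1:])"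
  shows "char_poly (laplacian (Suc n) (cone n E)) =
    [:0, 1:] * [:- (real n + 1), 1:] * (\<Prod>e\<leftarrow>es. [:- (e + 1), 1:])"
proof (rule poly_eqI_cofinite[of 1])
  fix x :: real assume "x \<noteq> 1"
  have "(x - 1) * poly (char_poly (laplacian (Suc n) (cone n E))) x =
      (x - 1) * (x * (x - real n - 1) * (\<Prod>e\<leftarrow>es. poly [:- (e + 1), 1:] x))"
    unfolding poly_char_poly_laplacian_cone[OF assms(1)] assms(2)
    by (simp add: poly_prod_list o_def algebra_simps)
  with \<open>x \<noteq> 1\<close> have "poly (char_poly (laplacian (Suc n) (cone n E))) x =
      x * (x - real n - 1) * (\<Prod>e\<leftarrow>es. poly [:- (e + 1), 1:] x)"
    by simp
  then show "poly (char_poly (laplacian (Suc n) (cone n E))) x =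
      poly ([:0, 1:] * [:- (real n + 1), 1:] * (\<Prod>e\<leftarrow>es. [:- (e + 1), 1:])) x"
    by (simp add: poly_prod_list o_def algebra_simps)
qed


section \<open>Threshold graphs coded by their dominating nodes\<close>

text \<open>The code of a threshold graph on \<open>n\<close> nodes is the strictly decreasing list of the nodes
  \<open>c > 0\<close> that were added as dominating nodes (a dominating node \<open>0\<close> is isolated).\<close>

definition dom_seq :: "nat \<Rightarrow> nat list \<Rightarrow> bool" where
  "dom_seq n cs \<longleftrightarrow> sorted_wrt (>) cs \<and> (\<forall>c\<in>set cs. 0 < c \<and> c < n)"

definition thr_graph :: "nat \<Rightarrow> nat list \<Rightarrow> nat \<Rightarrow> nat \<Rightarrow> bool" where
  "thr_graph n cs i j \<longleftrightarrow> i < n \<and> j < n \<and> i \<noteq> j \<and> max i j \<in> set cs"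

lemma dom_seq_Nil [simp]: "dom_seq n []"
  unfolding dom_seq_def by simp

lemma dom_seq_Cons: "dom_seq n (c # cs) \<longleftrightarrow> 0 < c \<and> c < n \<and> dom_seq c cs"
  unfolding dom_seq_def by auto

lemma dom_seq_mono: "dom_seq n cs \<Longrightarrow> n \<le> m \<Longrightarrow> dom_seq m cs"
  unfolding dom_seq_def by auto

lemma dom_seq_0: "dom_seq 0 cs \<longleftrightarrow> cs = []"
  unfolding dom_seq_def by (cases cs) auto

lemma dom_seq_induct [consumes 1, case_names zero isolated dominating]:
  assumes "dom_seq n cs"
    and zero: "P 0 []"
    and isolated: "\<And>n cs. dom_seq n cs \<Longrightarrow> P n cs \<Longrightarrow> P (Suc n) cs"
    and dominating: "\<And>n cs. dom_seq n cs \<Longrightarrow> 0 < n \<Longrightarrow> P n cs \<Longrightarrow> P (Suc n) (n # cs)"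
  shows "P n cs"
  using assms(1)
proof (induction n arbitrary: cs)
  case 0
  then show ?case using zero by (simp add: dom_seq_0)
next
  case (Suc n)
  show ?case
  proof (cases "n \<in> set cs")
    case True
    then obtain cs' where "cs = n # cs'"
      using Suc.prems unfolding dom_seq_def by (cases cs) auto
    with Suc show ?thesis by (auto simp: dom_seq_Cons intro: dominating)
  next
    case False
    with Suc.prems have "dom_seq n cs" unfolding dom_seq_def by (auto simp: less_Suc_eq)
    with Suc.IH show ?thesis by (intro isolated)
  qed
qed

lemma simple_graph_thr_graph: "simple_graph n (thr_graph n cs)"
  unfolding simple_graph_def thr_graph_def by (auto simp: max_def)

lemma thr_graph_Suc: "dom_seq n cs \<Longrightarrow> thr_graph (Suc n) cs = thr_graph n cs"
  unfolding thr_graph_def dom_seq_def by (intro ext) (auto simp: max_def less_Suc_eq)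

lemma thr_graph_Suc_Cons: "dom_seq n cs \<Longrightarrow> thr_graph (Suc n) (n # cs) = cone n (thr_graph n cs)"
  unfolding thr_graph_def dom_seq_def cone_def by (intro ext) (auto simp: max_def less_Suc_eq)

lemma threshold_thr_graph: "dom_seq n cs \<Longrightarrow> threshold n (thr_graph n cs)"
proof (induction rule: dom_seq_induct)
  case zero
  have "thr_graph 0 [] = (\<lambda>_ _. False)" unfolding thr_graph_def by auto
  then show ?case by (simp add: threshold.empty)
next
  case (isolated n cs)
  then show ?case by (simp add: thr_graph_Suc threshold.add_isolated)
next
  case (dominating n cs)
  show ?case
    unfolding thr_graph_Suc_Cons[OF dominating(1)] cone_def
    using dominating(3) by (rule threshold.add_dominating)
qed

lemma threshold_imp_thr_graph: "threshold n T \<Longrightarrow> \<exists>cs. dom_seq n cs \<and> T = thr_graph n cs"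
proof (induction rule: threshold.induct)
  case empty
  show ?case by (intro exI[of _ "[]"]) (auto simp: thr_graph_def)
next
  case (add_isolated n E)
  then show ?case by (metis dom_seq_mono le_SucI order_refl thr_graph_Suc)
next
  case (add_dominating n E)
  then obtain cs where cs: "dom_seq n cs" "E = thr_graph n cs" by blast
  show ?case
  proof (cases "n = 0")
    case True
    with cs show ?thesis by (intro exI[of _ cs]) (simp add: dom_seq_0 thr_graph_def)
  next
    case False
    with cs show ?thesis
      by (intro exI[of _ "n # cs"]) (simp add: dom_seq_Cons thr_graph_Suc_Cons cone_def)
  qed
qed

lemma num_edges_thr_graph: "dom_seq n cs \<Longrightarrow> num_edges n (thr_graph n cs) = sum_list cs"
proof (induction rule: dom_seq_induct)
  case zero
  then show ?case unfolding num_edges_def by simp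
next
  case (isolated n cs)
  then show ?case by (simp add: thr_graph_Suc num_edges_add_isolated simple_graph_thr_graph)
next
  case (dominating n cs)
  then show ?case by (simp add: thr_graph_Suc_Cons num_edges_cone simple_graph_thr_graph)
qed


section \<open>The Laplacian spectrum of a threshold graph\<close>

fun thr_eigs :: "nat \<Rightarrow> nat list \<Rightarrow> nat list" where
  "thr_eigs 0 cs = []"
| "thr_eigs (Suc n) cs = (if cs \<noteq> [] \<and> hd cs = n
      then Suc n # map Suc (butlast (thr_eigs n (tl cs))) @ [0]
      else thr_eigs n cs @ [0])"

declare thr_eigs.simps(2) [simp del]

lemma thr_eigs_Suc_Cons: "thr_eigs (Suc n) (n # cs) = Suc n # map Suc (butlast (thr_eigs n cs)) @ [0]"
  by (simp add: thr_eigs.simps)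

lemma thr_eigs_Suc: "dom_seq n cs \<Longrightarrow> thr_eigs (Suc n) cs = thr_eigs n cs @ [0]"
  unfolding dom_seq_def by (cases cs) (auto simp: thr_eigs.simps)

lemma last_thr_eigs: "last (thr_eigs (Suc n) cs) = 0"
  by (simp add: thr_eigs.simps)

lemma length_thr_eigs: "dom_seq n cs \<Longrightarrow> length (thr_eigs n cs) = n"
  by (induction rule: dom_seq_induct) (auto simp: thr_eigs_Suc thr_eigs_Suc_Cons)

lemma thr_eigs_butlast_snoc_0:
  assumes "dom_seq n cs" and "0 < n"
  shows "thr_eigs n cs = butlast (thr_eigs n cs) @ [0]"
proof -
  obtain m where n: "n = Suc m" using assms(2) by (cases n) auto
  have "thr_eigs n cs \<noteq> []" using length_thr_eigs[OF assms(1)] assms(2) by auto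
  then show ?thesis using append_butlast_last_id last_thr_eigs unfolding n by metis
qed

lemma thr_eigs_le: "\<forall>e\<in>set (thr_eigs n cs). e \<le> n"
proof (induction n arbitrary: cs)
  case (Suc n)
  then have "\<forall>e\<in>set (thr_eigs n cs'). e \<le> Suc n" for cs' using le_SucI by blast
  with Suc.IH show ?case by (auto simp: thr_eigs.simps dest: in_set_butlastD)
qed simp

lemma sorted_thr_eigs: "sorted_wrt (\<ge>) (thr_eigs n cs)"
proof (induction n arbitrary: cs)
  case (Suc n)
  have "sorted_wrt (\<ge>) (butlast (thr_eigs n (tl cs)))"
    using Suc.IH by (metis butlast_conv_take sorted_wrt_take)
  then show ?case
    using Suc.IH thr_eigs_le[of n]
    by (auto simp: thr_eigs.simps sorted_wrt_append sorted_wrt_map dest: in_set_butlastD)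
qed simp

lemma char_poly_thr_graph:
  "dom_seq n cs \<Longrightarrow> char_poly (laplacian n (thr_graph n cs)) = (\<Prod>e\<leftarrow>thr_eigs n cs. [:- real e, 1:])"
proof (induction rule: dom_seq_induct)
  case zero
  show ?case unfolding char_poly_def by (simp add: det_dim_zero)
next
  case (isolated n cs)
  then show ?case
    by (simp add: thr_graph_Suc thr_eigs_Suc char_poly_laplacian_add_isolated simple_graph_thr_graph)
next
  case (dominating n cs)
  obtain es where es: "thr_eigs n cs = es @ [0]"
    using thr_eigs_butlast_snoc_0[OF dominating(1,2)] by blast
  have "char_poly (laplacian n (thr_graph n cs)) = (\<Prod>e\<leftarrow>map real es @ [0]. [:- e, 1:])"
    using dominating(3) by (simp add: es o_def)
  then have "char_poly (laplacian (Suc n) (cone n (thr_graph n cs))) =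
      [:0, 1:] * [:- (real n + 1), 1:] * (\<Prod>e\<leftarrow>map real es. [:- (e + 1), 1:])"
    by (rule char_poly_laplacian_cone[OF simple_graph_thr_graph])
  also have "(\<Prod>e\<leftarrow>map real es. [:- (e + 1), 1:]) = (\<Prod>e\<leftarrow>map Suc es. [:- real e, 1:])"
    unfolding map_map
    by (intro arg_cong[where f = prod_list] map_cong refl) (simp only: o_def of_nat_Suc add.commute)
  finally show ?case
    unfolding thr_graph_Suc_Cons[OF dominating(1)] thr_eigs_Suc_Cons es
    by (simp add: mult_ac add.commute)
qed

lemma lap_spectrum_thr_graph:
  assumes "dom_seq n cs"
  shows "lap_spectrum n (thr_graph n cs) = mset (map real (thr_eigs n cs))"
proof -
  have "(\<Prod>e\<leftarrow>thr_eigs n cs. [:- real e, 1:]) = (\<Prod>e\<leftarrow>map real (thr_eigs n cs). [:- e, 1:])"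
    by (simp add: o_def)
  then show ?thesis
    unfolding lap_spectrum_def char_poly_thr_graph[OF assms] by (simp only: proots_prod_list_linear)
qed


fun thr_top_sum :: "nat \<Rightarrow> nat list \<Rightarrow> nat" where
  "thr_top_sum 0 cs = 0"
| "thr_top_sum (Suc k) [] = 0"
| "thr_top_sum (Suc k) (c # cs) = c + min c (Suc k) + thr_top_sum k cs"

fun add_seq :: "nat list \<Rightarrow> nat list \<Rightarrow> nat list" where
  "add_seq [] ys = ys"
| "add_seq xs [] = xs"
| "add_seq (x # xs) (y # ys) = (x + y) # add_seq xs ys"

lemma thr_top_sum_Nil [simp]: "thr_top_sum k [] = 0"
  by (cases k) auto

lemma thr_top_sum_mono: "k \<le> k' \<Longrightarrow> thr_top_sum k cs \<le> thr_top_sum k' cs"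
proof (induction k cs arbitrary: k' rule: thr_top_sum.induct)
  case (3 k c cs)
  then obtain j where "k' = Suc j" "k \<le> j" by (cases k') auto
  with "3.IH"[of j] show ?case by simp
qed simp_all

lemma thr_top_sum_total: "dom_seq n cs \<Longrightarrow> n \<le> k \<Longrightarrow> thr_top_sum k cs = 2 * sum_list cs"
proof (induction cs arbitrary: n k)
  case (Cons c cs)
  then have "c < n" "dom_seq c cs" by (auto simp: dom_seq_Cons)
  then obtain j where "k = Suc j" "c \<le> j" using Cons.prems(2) by (cases k) auto
  then show ?case using Cons.IH[OF \<open>dom_seq c cs\<close> \<open>c \<le> j\<close>] by simp
qed simp

lemma thr_top_sum_le_add_seq_left: "thr_top_sum k xs \<le> thr_top_sum k (add_seq xs ys)"
proof (induction xs ys arbitrary: k rule: add_seq.induct)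
  case (3 x xs y ys)
  then show ?case by (cases k) (simp_all add: add_mono min.mono)
qed simp_all

lemma thr_top_sum_le_add_seq_right: "thr_top_sum k ys \<le> thr_top_sum k (add_seq xs ys)"
proof (induction xs ys arbitrary: k rule: add_seq.induct)
  case (3 x xs y ys)
  then show ?case by (cases k) (simp_all add: add_mono min.mono)
qed simp_all

lemma thr_top_sum_add_seq:
  "thr_top_sum k1 xs + thr_top_sum k2 ys \<le> thr_top_sum (k1 + k2) (add_seq xs ys)"
proof (induction xs ys arbitrary: k1 k2 rule: add_seq.induct)
  case (1 ys)
  then show ?case using thr_top_sum_mono[of k2 "k1 + k2" ys] by simp
next
  case (2 x xs)
  then show ?case using thr_top_sum_mono[of k1 "k1 + k2" "x # xs"] by simp
next
  case (3 x xs y ys)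
  show ?case
  proof (cases k1)
    case 0
    then show ?thesis using thr_top_sum_le_add_seq_right[of k2 "y # ys" "x # xs"] by simp
  next
    case (Suc j1)
    show ?thesis
    proof (cases k2)
      case 0
      then show ?thesis using thr_top_sum_le_add_seq_left[of k1 "x # xs" "y # ys"] by simp
    next
      case (Suc j2)
      have "thr_top_sum j1 xs + thr_top_sum j2 ys \<le> thr_top_sum (Suc (j1 + j2)) (add_seq xs ys)"
        by (rule order.trans[OF "3.IH" thr_top_sum_mono]) simp
      moreover have "min x (Suc j1) + min y (Suc j2) \<le> min (x + y) (Suc (Suc (j1 + j2)))"
        by (auto simp: min_def)
      ultimately show ?thesis using \<open>k1 = Suc j1\<close> Suc by simp
    qed
  qed
qed

lemma sum_list_add_seq: "sum_list (add_seq xs ys) = sum_list xs + sum_list ys"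
  by (induction xs ys rule: add_seq.induct) auto

lemma dom_seq_add_seq: "dom_seq n1 xs \<Longrightarrow> dom_seq n2 ys \<Longrightarrow> dom_seq (n1 + n2) (add_seq xs ys)"
  by (induction xs ys arbitrary: n1 n2 rule: add_seq.induct)
    (auto simp: dom_seq_Cons intro: dom_seq_mono)

lemma sum_take_thr_eigs:
  "dom_seq n cs \<Longrightarrow> k \<le> n \<Longrightarrow> sum_list (take k (thr_eigs n cs)) = thr_top_sum k cs"
proof (induction arbitrary: k rule: dom_seq_induct)
  case (isolated n cs)
  show ?case
  proof (cases "k \<le> n")
    case False
    then have "k = Suc n" using isolated.prems by simp
    then show ?thesis
      using isolated(2)[of n] thr_top_sum_total[OF isolated(1), of n] thr_top_sum_total[OF isolated(1), of k]
      by (simp add: thr_eigs_Suc[OF isolated(1)] length_thr_eigs[OF isolated(1)])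
  qed (simp add: thr_eigs_Suc[OF isolated(1)] length_thr_eigs[OF isolated(1)] isolated(2))
next
  case (dominating n cs)
  define es where "es = thr_eigs n cs"
  have len: "length es = n" unfolding es_def by (rule length_thr_eigs[OF dominating(1)])
  show ?case
  proof (cases k)
    case (Suc j)
    show ?thesis
    proof (cases "j < n")
      case True
      then have "take k (thr_eigs (Suc n) (n # cs)) = Suc n # map Suc (take j es)"
        unfolding thr_eigs_Suc_Cons es_def[symmetric] Suc using len by (simp add: take_map take_butlast)
      then show ?thesis
        using dominating(3)[of j] True Suc len by (simp add: es_def sum_list_Suc min_def)
    next
      case False
      then have "j = n" using dominating.prems Suc by simp
      have "sum_list (butlast es) = sum_list es"
        using thr_eigs_butlast_snoc_0[OF dominating(1,2)] unfolding es_def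
        by (metis add_0_right sum_list_append sum_list.Cons sum_list.Nil)
      then show ?thesis
        using dominating(3)[of n] \<open>j = n\<close> Suc len \<open>0 < n\<close>
        by (simp add: thr_eigs_Suc_Cons es_def[symmetric] sum_list_Suc)
    qed
  qed simp
qed simp

lemma lap_sum_thr_graph:
  assumes "dom_seq n cs" and "k \<le> n"
  shows "lap_sum n (thr_graph n cs) k = thr_top_sum k cs"
proof -
  have "lap_sum n (thr_graph n cs) k = top_sum (mset (map real (thr_eigs n cs))) k"
    using lap_sum_eq_top_sum[OF simple_graph_thr_graph assms(2)] lap_spectrum_thr_graph[OF assms(1)]
    by simp
  also have "\<dots> = sum_list (take k (map real (thr_eigs n cs)))"
    by (rule top_sum_mset) (simp add: sorted_wrt_map sorted_thr_eigs)
  also have "\<dots> = thr_top_sum k cs"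
    using sum_take_thr_eigs[OF assms] by (simp add: take_map sum_list_of_nat)
  finally show ?thesis .
qed


section \<open>Spectral threshold domination of disjoint unions\<close>

text \<open>The form of spectral threshold domination that is closed under disjoint unions: it
  includes \<open>k = 0\<close>, and the dominating threshold graphs enter only through their codes.\<close>

definition top_sum_dominated :: "nat \<Rightarrow> (nat \<Rightarrow> nat \<Rightarrow> bool) \<Rightarrow> bool" where
  "top_sum_dominated n E \<longleftrightarrow> (\<forall>k\<le>n. \<exists>cs. dom_seq n cs \<and> sum_list cs = num_edges n E \<and>
     top_sum (lap_spectrum n E) k \<le> real (thr_top_sum k cs))"

lemma spectrally_threshold_dominated_imp_top_sum_dominated:
  assumes G: "simple_graph n E" and dom: "spectrally_threshold_dominated n E"
  shows "top_sum_dominated n E"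
proof -
  have pos: "\<exists>cs. dom_seq n cs \<and> sum_list cs = num_edges n E \<and>
      top_sum (lap_spectrum n E) k \<le> real (thr_top_sum k cs)" if "k \<in> {1..n}" for k
  proof -
    obtain T where T: "threshold n T" "num_edges n T = num_edges n E" "lap_sum n T k \<ge> lap_sum n E k"
      using dom \<open>k \<in> {1..n}\<close> unfolding spectrally_threshold_dominated_def by blast
    obtain cs where cs: "dom_seq n cs" "T = thr_graph n cs"
      using threshold_imp_thr_graph[OF T(1)] by blast
    have "top_sum (lap_spectrum n E) k = lap_sum n E k"
      using lap_sum_eq_top_sum[OF G] that by simp
    also have "\<dots> \<le> real (thr_top_sum k cs)"
      using T(3) lap_sum_thr_graph[OF cs(1)] that cs(2) by simp
    finally show ?thesis using cs T(2) num_edges_thr_graph[OF cs(1)] by auto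
  qed
  show ?thesis unfolding top_sum_dominated_def
  proof (intro allI impI)
    fix k assume "k \<le> n"
    show "\<exists>cs. dom_seq n cs \<and> sum_list cs = num_edges n E \<and>
        top_sum (lap_spectrum n E) k \<le> real (thr_top_sum k cs)"
    proof (cases "k = 0")
      case True
      show ?thesis
      proof (cases "n = 0")
        case True
        then show ?thesis using \<open>k = 0\<close> by (intro exI[of _ "[]"]) (simp add: num_edges_def)
      next
        case False
        then show ?thesis using pos[of 1] \<open>k = 0\<close> by auto
      qed
    qed (use pos \<open>k \<le> n\<close> in auto)
  qed
qed

lemma top_sum_dominated_disj_union:
  assumes G1: "simple_graph n1 E1" and G2: "simple_graph n2 E2"
    and dom1: "top_sum_dominated n1 E1" and dom2: "top_sum_dominated n2 E2"
  shows "top_sum_dominated (n1 + n2) (disj_union_rel n1 E1 E2)"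
  unfolding top_sum_dominated_def
proof (intro allI impI)
  fix k
  obtain k1 k2 where k12: "k1 \<le> n1" "k2 \<le> n2" "k1 + k2 \<le> k"
    and split: "top_sum (lap_spectrum n1 E1 + lap_spectrum n2 E2) k \<le>
      top_sum (lap_spectrum n1 E1) k1 + top_sum (lap_spectrum n2 E2) k2"
    using top_sum_union_le size_lap_spectrum[OF G1] size_lap_spectrum[OF G2] by metis
  obtain cs1 where cs1: "dom_seq n1 cs1" "sum_list cs1 = num_edges n1 E1"
    "top_sum (lap_spectrum n1 E1) k1 \<le> real (thr_top_sum k1 cs1)"
    using dom1 k12(1) unfolding top_sum_dominated_def by blast
  obtain cs2 where cs2: "dom_seq n2 cs2" "sum_list cs2 = num_edges n2 E2"
    "top_sum (lap_spectrum n2 E2) k2 \<le> real (thr_top_sum k2 cs2)"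
    using dom2 k12(2) unfolding top_sum_dominated_def by blast
  have "thr_top_sum k1 cs1 + thr_top_sum k2 cs2 \<le> thr_top_sum k (add_seq cs1 cs2)"
    using thr_top_sum_add_seq thr_top_sum_mono[OF k12(3)] by (rule order.trans)
  then have "top_sum (lap_spectrum (n1 + n2) (disj_union_rel n1 E1 E2)) k \<le>
      real (thr_top_sum k (add_seq cs1 cs2))"
    unfolding lap_spectrum_disj_union[OF G1 G2] using split cs1(3) cs2(3) by linarith
  moreover have "sum_list (add_seq cs1 cs2) = num_edges (n1 + n2) (disj_union_rel n1 E1 E2)"
    by (simp add: sum_list_add_seq num_edges_disj_union[OF G1 G2] cs1(2) cs2(2))
  ultimately show "\<exists>cs. dom_seq (n1 + n2) cs \<and>
      sum_list cs = num_edges (n1 + n2) (disj_union_rel n1 E1 E2) \<and>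
      top_sum (lap_spectrum (n1 + n2) (disj_union_rel n1 E1 E2)) k \<le> real (thr_top_sum k cs)"
    using dom_seq_add_seq[OF cs1(1) cs2(1)] by blast
qed

lemma top_sum_dominated_disj_union_list:
  assumes "\<forall>H\<in>set Gs. simple_graph (fst H) (snd H) \<and> spectrally_threshold_dominated (fst H) (snd H)"
  shows "simple_graph (fst (disj_union_list Gs)) (snd (disj_union_list Gs)) \<and>
    top_sum_dominated (fst (disj_union_list Gs)) (snd (disj_union_list Gs))"
  using assms
proof (induction Gs)
  case Nil
  have "top_sum_dominated 0 (\<lambda>_ _. False)"
    unfolding top_sum_dominated_def by (auto simp: num_edges_def intro!: exI[of _ "[]"])
  then show ?case unfolding disj_union_list_def by (simp add: simple_graph_def)
next
  case (Cons G Gs)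
  obtain n1 E1 where G: "G = (n1, E1)" by fastforce
  obtain n2 E2 where Gs: "disj_union_list Gs = (n2, E2)" by fastforce
  have "simple_graph n1 E1" "top_sum_dominated n1 E1"
    using Cons.prems spectrally_threshold_dominated_imp_top_sum_dominated unfolding G by auto
  moreover have "simple_graph n2 E2" "top_sum_dominated n2 E2" using Cons Gs by auto
  moreover have "disj_union_list (G # Gs) = (n1 + n2, disj_union_rel n1 E1 E2)"
    unfolding disj_union_list_def using Gs by (simp add: G disj_union_list_def disj_union_Pair)
  ultimately show ?case by (simp add: simple_graph_disj_union top_sum_dominated_disj_union)
qed

theorem lemma3:
  fixes Gs :: "graph list" and n :: nat and E :: "nat \<Rightarrow> nat \<Rightarrow> bool" and k :: nat
  assumes comps: "\<forall>H \<in> set Gs. simple_graph (fst H) (snd H) \<and>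
                     spectrally_threshold_dominated (fst H) (snd H)"
    and G: "simple_graph n E"
    and union: "graph_iso (n, E) (disj_union_list Gs)"
    and k: "k \<in> {1..n}"
  shows "\<exists>T. threshold n T \<and> num_edges n T = num_edges n E \<and>
             lap_sum n T k \<ge> lap_sum n E k"
proof -
  obtain m F where U: "disj_union_list Gs = (m, F)" by fastforce
  have F: "simple_graph m F" "top_sum_dominated m F"
    using top_sum_dominated_disj_union_list[OF comps] unfolding U by auto
  have "m = n" using union unfolding U graph_iso_def by simp
  obtain cs where cs: "dom_seq n cs" "sum_list cs = num_edges n F"
    and le: "top_sum (lap_spectrum n F) k \<le> real (thr_top_sum k cs)"
    using F(2) k unfolding top_sum_dominated_def \<open>m = n\<close> by auto
  have "lap_sum n E k = top_sum (lap_spectrum n F) k"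
    using lap_sum_eq_top_sum[OF G] lap_spectrum_iso[OF union[unfolded U]] k \<open>m = n\<close> by simp
  also have "\<dots> \<le> lap_sum n (thr_graph n cs) k"
    using le lap_sum_thr_graph[OF cs(1)] k by simp
  finally show ?thesis
    using threshold_thr_graph[OF cs(1)] num_edges_thr_graph[OF cs(1)] cs(2)
      num_edges_iso[OF G F(1) union[unfolded U]] \<open>m = n\<close>
    by auto
qed

end
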